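(* Let $d\ge 1$ and let $\mu$ be the probability measure on $\mathbb{R}^d$ given by $\mathrm{d}\mu(x)=\rho(|x|)\,\mathrm{d}x$, where $\rho:[0,\infty)\to(0,\infty)$ is continuous. Let $A\subset\mathbb{R}^d$ be a bounded closed convex set containing the origin $0$. Then for every closed ball $B$ centered at the origin, $$\mu(A\cap B)\ge \mu(A)\,\mu(B).$$
   Context: $|x|$ denotes the Euclidean norm on $\mathbb{R}^d$. The set $A$ is not assumed to be symmetric. In particular the conclusion applies to the standard Gaussian measure $\gamma_d$. *)

theory Defs
  imports "HOL-Probability.Probability"
begin

end

theory Submission imports Defs begin

(* For r > 0 let C be the radial cone of A at radius r: the set of x whose ray
   meets the sphere of radius r inside A.  C is a cone, and since A is star-shaped
   about 0 it is squeezed between A and the ball B = cball 0 r: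
       C \<inter> B \<subseteq> A   and   A - B \<subseteq> C.
   A radial density factorises into a "direction" and a "radius" part, so every Borel
   cone is independent of every radial set; in particular mu(C \<inter> B) = mu(C) mu(B).
   The sandwich together with this independence yields mu(A \<inter> B) \<ge> mu(A) mu(B) by
   elementary arithmetic. *)

section \<open>Lebesgue measure of cones\<close>

lemma cone_scaleR_iff:
  fixes C :: "'a::real_vector set"
  assumes "cone C" "0 < c"
  shows "c *\<^sub>R x \<in> C \<longleftrightarrow> x \<in> C"
proof
  assume "c *\<^sub>R x \<in> C"
  from mem_cone[OF assms(1) this, of "inverse c"] assms(2)
  show "x \<in> C" by simp
qed (use assms in \<open>auto intro: mem_cone\<close>)

lemma emeasure_lborel_cball_nonpos:
  assumes "t \<le> 0"
  shows "emeasure lborel (cball (0::'a::euclidean_space) t) = 0"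
proof (cases "t = 0")
  case True
  then show ?thesis by (simp add: emeasure_cball)
qed (use assms in simp)

(* Dilating by t scales the part of a cone inside the ball of radius t back to the
   part inside the unit ball, at the cost of the Jacobian t^d. *)
lemma lborel_cone_cball_scale:
  fixes C :: "'a::euclidean_space set"
  assumes C: "C \<in> sets borel" "cone C" and t: "0 < t"
  shows "emeasure lborel (C \<inter> cball 0 t) = ennreal (t ^ DIM('a)) * emeasure lborel (C \<inter> cball 0 1)"
proof -
  have lborel_dilated: "(lborel::'a measure) = density (distr lborel borel (\<lambda>x. t *\<^sub>R x)) (\<lambda>_. t ^ DIM('a))"
    using lborel_affine[of t "0::'a"] t by simp
  have "emeasure lborel (C \<inter> cball 0 t)
      = ennreal (t ^ DIM('a)) * emeasure (distr lborel borel (\<lambda>x. t *\<^sub>R x)) (C \<inter> cball 0 t)"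
    using C t by (subst lborel_dilated) (simp add: emeasure_density nn_integral_cmult_indicator)
  also have "emeasure (distr lborel borel (\<lambda>x. t *\<^sub>R x)) (C \<inter> cball 0 t)
      = emeasure lborel ((\<lambda>x. t *\<^sub>R x) -` (C \<inter> cball 0 t))"
    using C by (subst emeasure_distr) auto
  also have "(\<lambda>x. t *\<^sub>R x) -` (C \<inter> cball 0 t) = C \<inter> cball 0 1"
    using t cone_scaleR_iff[OF C(2) t] by (auto simp: mem_cball)
  finally show ?thesis .
qed

definition cone_fraction :: "'a::euclidean_space set \<Rightarrow> real" where
  "cone_fraction C = measure lborel (C \<inter> cball 0 1) / unit_ball_vol DIM('a)"

lemma lborel_cone_cball:
  fixes C :: "'a::euclidean_space set"
  assumes C: "C \<in> sets borel" "cone C"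
  shows "emeasure lborel (C \<inter> cball 0 t) = ennreal (cone_fraction C) * emeasure lborel (cball (0::'a) t)"
proof (cases "0 < t")
  case True
  define V where "V = unit_ball_vol DIM('a)"
  have V: "0 < V" unfolding V_def by simp
  have "emeasure lborel (C \<inter> cball (0::'a) 1) \<le> emeasure lborel (cball (0::'a) 1)"
    by (rule emeasure_mono) auto
  then have unit_part: "emeasure lborel (C \<inter> cball (0::'a) 1) = ennreal (measure lborel (C \<inter> cball 0 1))"
    using emeasure_lborel_cball_finite[of "0::'a" 1]
    by (intro emeasure_eq_ennreal_measure) (auto simp: top_unique)
  have fraction: "cone_fraction C = measure lborel (C \<inter> cball 0 1) / V"
    by (simp add: cone_fraction_def V_def)
  have "emeasure lborel (C \<inter> cball 0 t) = ennreal (t ^ DIM('a) * measure lborel (C \<inter> cball 0 1))"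
    using lborel_cone_cball_scale[OF C True] unit_part True by (simp add: ennreal_mult')
  also have "t ^ DIM('a) * measure lborel (C \<inter> cball 0 1) = cone_fraction C * (V * t ^ DIM('a))"
    using V by (simp add: fraction)
  also have "ennreal \<dots> = ennreal (cone_fraction C) * ennreal (V * t ^ DIM('a))"
    by (rule ennreal_mult) (use V True in \<open>simp_all add: fraction\<close>)
  finally show ?thesis
    using True by (simp add: emeasure_cball V_def)
next
  case False
  then have "emeasure lborel (C \<inter> cball (0::'a) t) \<le> emeasure lborel (cball (0::'a) t)"
    by (intro emeasure_mono) auto
  with False show ?thesis
    by (simp add: emeasure_lborel_cball_nonpos)
qed

lemma measure_eqI_atMost_real:
  fixes M N :: "real measure"
  assumes sets: "sets M = sets borel" "sets N = sets borel"
  assumes fin: "\<And>x. emeasure M {..x} < \<infinity>"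
  assumes eq: "\<And>x. emeasure M {..x} = emeasure N {..x}"
  shows "M = N"
proof (rule measure_eqI_generator_eq_countable[where E="range atMost" and \<Omega>=UNIV
                                                   and A="range (\<lambda>n::nat. {..real n})"])
  show "Int_stable (range atMost :: real set set)"
    by (auto simp: Int_stable_def)
  show "sets M = sigma_sets UNIV (range atMost)" "sets N = sigma_sets UNIV (range atMost)"
    unfolding sets borel_eq_atMost by auto
  show "\<Union> (range (\<lambda>n::nat. {..real n})) = UNIV"
    by (auto intro: real_arch_simple)
qed (use fin eq in \<open>auto simp: less_top\<close>)

lemma distr_norm_restrict_cone:
  fixes C :: "'a::euclidean_space set"
  assumes C: "C \<in> sets borel" "cone C"
  shows "distr (density lborel (indicator C)) borel norm
       = density (distr lborel borel (norm :: 'a \<Rightarrow> real)) (\<lambda>_. ennreal (cone_fraction C))"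
proof (rule measure_eqI_atMost_real)
  have norm_atMost: "(norm :: 'a \<Rightarrow> real) -` {..x} = cball 0 x" for x
    by (auto simp: mem_cball)
  have restricted: "emeasure (distr (density lborel (indicator C)) borel norm) {..x}
                    = emeasure lborel (C \<inter> cball (0::'a) x)" for x
    using C by (simp add: emeasure_distr emeasure_restricted norm_atMost)
  have "emeasure lborel (C \<inter> cball (0::'a) x) \<le> emeasure lborel (cball (0::'a) x)" for x
    by (rule emeasure_mono) auto
  then show "emeasure (distr (density lborel (indicator C)) borel norm) {..x} < \<infinity>" for x
    unfolding restricted using emeasure_lborel_cball_finite[of "0::'a" x] by (rule order.strict_trans1)
  show "emeasure (distr (density lborel (indicator C)) borel norm) {..x}
      = emeasure (density (distr lborel borel (norm :: 'a \<Rightarrow> real)) (\<lambda>_. ennreal (cone_fraction C))) {..x}" for x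
    unfolding restricted lborel_cone_cball[OF C]
    by (simp add: emeasure_density emeasure_distr nn_integral_cmult_indicator norm_atMost)
qed simp_all

lemma nn_integral_cone_radial:
  fixes C :: "'a::euclidean_space set" and G :: "real \<Rightarrow> ennreal"
  assumes C: "C \<in> sets borel" "cone C" and G: "G \<in> borel_measurable borel"
  shows "(\<integral>\<^sup>+x. indicator C x * G (norm x) \<partial>lborel)
       = ennreal (cone_fraction C) * (\<integral>\<^sup>+x. G (norm x) \<partial>(lborel::'a measure))"
proof -
  have "(\<integral>\<^sup>+x. indicator C x * G (norm x) \<partial>lborel) = (\<integral>\<^sup>+x. G (norm x) \<partial>density lborel (indicator C))"
    using C G by (subst nn_integral_density) auto
  also have "\<dots> = (\<integral>\<^sup>+s. G s \<partial>distr (density lborel (indicator C)) borel norm)"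
    using G by (subst nn_integral_distr) auto
  also have "\<dots> = (\<integral>\<^sup>+s. ennreal (cone_fraction C) * G s \<partial>distr lborel borel (norm :: 'a \<Rightarrow> real))"
    unfolding distr_norm_restrict_cone[OF C] using G by (subst nn_integral_density) auto
  also have "\<dots> = ennreal (cone_fraction C) * (\<integral>\<^sup>+x. G (norm x) \<partial>(lborel::'a measure))"
    using G by (simp add: nn_integral_cmult nn_integral_distr)
  finally show ?thesis .
qed

section \<open>Cones are independent of radial sets under a radial density\<close>

lemma radial_density_cone_radial_set:
  fixes f :: "real \<Rightarrow> ennreal" and C :: "'a::euclidean_space set"
  assumes f: "f \<in> borel_measurable borel" and mu: "\<mu> = density lborel (\<lambda>x. f (norm x))"
    and C: "C \<in> sets borel" "cone C" and E: "E \<in> sets borel"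
  shows "emeasure \<mu> (C \<inter> norm -` E) = ennreal (cone_fraction C) * emeasure \<mu> (norm -` E)"
proof -
  have radial_E: "(norm :: 'a \<Rightarrow> real) -` E \<in> sets borel"
    using measurable_sets[OF borel_measurable_norm E] by simp
  have "emeasure \<mu> (C \<inter> norm -` E) = (\<integral>\<^sup>+x. indicator C x * (f (norm x) * indicator E (norm x)) \<partial>lborel)"
    unfolding mu using f C radial_E
    by (simp add: emeasure_density indicator_inter_arith indicator_vimage mult_ac)
  also have "\<dots> = ennreal (cone_fraction C) * (\<integral>\<^sup>+x. f (norm x) * indicator E (norm x) \<partial>(lborel::'a measure))"
    using f E by (intro nn_integral_cone_radial C) (auto intro: borel_measurable_indicator)
  also have "(\<integral>\<^sup>+x. f (norm x) * indicator E (norm x) \<partial>(lborel::'a measure)) = emeasure \<mu> (norm -` E)"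
    unfolding mu using f radial_E by (simp add: emeasure_density indicator_vimage)
  finally show ?thesis .
qed

(* For a radial probability density the cone fraction is the probability of the cone,
   so a cone and a centred ball are independent events. *)
lemma radial_prob_cone_cball_indep:
  fixes f :: "real \<Rightarrow> ennreal" and C :: "'a::euclidean_space set"
  assumes f: "f \<in> borel_measurable borel" and mu: "\<mu> = density lborel (\<lambda>x. f (norm x))"
    and prob: "prob_space \<mu>" and C: "C \<in> sets borel" "cone C"
  shows "measure \<mu> (C \<inter> cball 0 r) = measure \<mu> C * measure \<mu> (cball 0 r)"
proof -
  interpret prob_space \<mu> by (rule prob)
  have space: "space \<mu> = UNIV" unfolding mu by simp
  have cone_prob: "emeasure \<mu> C = ennreal (cone_fraction C)"
    using radial_density_cone_radial_set[OF f mu C, of UNIV] emeasure_space_1 space by simp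
  have "(norm :: 'a \<Rightarrow> real) -` {..r} = cball 0 r" by (auto simp: mem_cball)
  then have "emeasure \<mu> (C \<inter> cball 0 r) = emeasure \<mu> C * emeasure \<mu> (cball 0 r)"
    using radial_density_cone_radial_set[OF f mu C, of "{..r}"] cone_prob by simp
  then show ?thesis
    by (simp add: emeasure_eq_measure ennreal_mult'[symmetric])
qed

section \<open>The radial cone of a star-shaped set\<close>

definition radial_cone :: "real \<Rightarrow> 'a::real_normed_vector set \<Rightarrow> 'a set" where
  "radial_cone r A = {x. (r / norm x) *\<^sub>R x \<in> A}"

(* Since 0 \<in> A, the origin belongs to the radial cone; elsewhere membership only
   depends on the direction of x. *)
lemma radial_cone_cone:
  assumes "0 \<in> A"
  shows "cone (radial_cone r A)"
  unfolding cone_def radial_cone_def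
proof (intro ballI allI impI)
  fix x and c :: real assume x: "x \<in> {x. (r / norm x) *\<^sub>R x \<in> A}" and c: "0 \<le> c"
  show "c *\<^sub>R x \<in> {x. (r / norm x) *\<^sub>R x \<in> A}"
  proof (cases "c = 0 \<or> x = 0")
    case False
    with c have "0 < c" by simp
    then have same_point: "(r / norm (c *\<^sub>R x)) *\<^sub>R (c *\<^sub>R x) = (r / norm x) *\<^sub>R x"
      using False by (simp add: field_simps)
    from x show ?thesis by (simp only: mem_Collect_eq same_point)
  qed (use assms x in auto)
qed

lemma radial_cone_borel:
  fixes A :: "'a::euclidean_space set"
  assumes "A \<in> sets borel"
  shows "radial_cone r A \<in> sets borel"
proof -
  have "(\<lambda>x::'a. (r / norm x) *\<^sub>R x) \<in> borel_measurable borel" by measurable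
  from measurable_sets[OF this assms] show ?thesis
    by (simp add: radial_cone_def vimage_def)
qed

(* Inside the ball, a point of the radial cone is a shrunk copy of a point of A. *)
lemma radial_cone_inside_ball:
  assumes star: "\<And>x \<theta>. x \<in> A \<Longrightarrow> 0 \<le> \<theta> \<Longrightarrow> \<theta> \<le> 1 \<Longrightarrow> \<theta> *\<^sub>R x \<in> A"
    and "0 \<in> A" "0 < r"
  shows "radial_cone r A \<inter> cball 0 r \<subseteq> A"
proof
  fix x assume x: "x \<in> radial_cone r A \<inter> cball 0 r"
  show "x \<in> A"
  proof (cases "x = 0")
    case False
    have "(norm x / r) *\<^sub>R ((r / norm x) *\<^sub>R x) \<in> A"
      using x \<open>0 < r\<close> star[of "(r / norm x) *\<^sub>R x" "norm x / r"]
      by (simp add: radial_cone_def mem_cball)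
    with False \<open>0 < r\<close> show ?thesis by simp
  qed (use \<open>0 \<in> A\<close> in simp)
qed

(* Outside the ball, every point of A lies in the radial cone: shrink it onto the sphere. *)
lemma radial_cone_outside_ball:
  assumes star: "\<And>x \<theta>. x \<in> A \<Longrightarrow> 0 \<le> \<theta> \<Longrightarrow> \<theta> \<le> 1 \<Longrightarrow> \<theta> *\<^sub>R x \<in> A"
    and "0 < r"
  shows "A - cball 0 r \<subseteq> radial_cone r A"
proof
  fix x assume x: "x \<in> A - cball 0 r"
  then have "r < norm x" by (simp add: mem_cball)
  with x \<open>0 < r\<close> have "(r / norm x) *\<^sub>R x \<in> A"
    by (intro star) (auto simp: divide_le_eq_1)
  then show "x \<in> radial_cone r A" by (simp add: radial_cone_def)
qed

lemma convex_star_origin: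
  assumes "convex A" "0 \<in> A" "x \<in> A" "0 \<le> \<theta>" "\<theta> \<le> 1"
  shows "\<theta> *\<^sub>R x \<in> A"
  using convexD[OF assms(1) assms(3) assms(2), of \<theta> "1 - \<theta>"] assms(4,5) by simp

section \<open>Correlation from an independent sandwich\<close>

lemma (in prob_space) correlation_from_independent_sandwich:
  assumes events: "A \<in> events" "B \<in> events" "C \<in> events"
    and inner: "C \<inter> B \<subseteq> A" and outer: "A - B \<subseteq> C"
    and indep: "prob (C \<inter> B) = prob C * prob B"
  shows "prob A * prob B \<le> prob (A \<inter> B)"
proof -
  have split_A: "prob A = prob (A \<inter> B) + prob (A - B)"
    using finite_measure_Diff'[of A B] events by simp
  have inside: "prob C * prob B \<le> prob (A \<inter> B)"
    unfolding indep[symmetric] using inner events by (intro finite_measure_mono) auto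
  have "prob (A - B) \<le> prob (C - B)"
    using outer events by (intro finite_measure_mono) auto
  also have "\<dots> = prob C - prob C * prob B"
    using finite_measure_Diff'[of C B] events indep by simp
  finally have outside: "prob (A - B) \<le> prob C * (1 - prob B)"
    by (simp add: algebra_simps)
  have "prob (A - B) * prob B \<le> prob C * prob B * (1 - prob B)"
    using mult_right_mono[OF outside, of "prob B"] by (simp add: mult_ac)
  also have "\<dots> \<le> prob (A \<inter> B) * (1 - prob B)"
    using inside by (intro mult_right_mono) auto
  finally show ?thesis
    unfolding split_A by (simp add: algebra_simps)
qed

theorem theorem1p1:
  fixes \<rho> :: "real \<Rightarrow> real"
    and \<mu> :: "'a::euclidean_space measure"
    and A :: "'a set"
    and r :: real
  assumes rho_cont: "continuous_on {0..} \<rho>"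
    and rho_pos: "\<And>t. t \<ge> 0 \<Longrightarrow> \<rho> t > 0"
    and mu_def: "\<mu> = density lborel (\<lambda>x. ennreal (\<rho> (norm x)))"
    and prob: "prob_space \<mu>"
    and A_bounded: "bounded A" and A_closed: "closed A" and A_convex: "convex A"
    and A_0: "0 \<in> A"
    and r_pos: "0 < r"
  shows "measure \<mu> (A \<inter> cball 0 r) \<ge> measure \<mu> A * measure \<mu> (cball 0 r)"
proof -
  interpret prob_space \<mu> by (rule prob)
  let ?C = "radial_cone r A"
  (* Extending rho evenly to the whole line makes the radial profile Borel measurable. *)
  define f where "f s = ennreal (\<rho> \<bar>s\<bar>)" for s
  have "continuous_on UNIV (\<lambda>s. \<rho> \<bar>s\<bar>)"
    by (rule continuous_on_compose2[OF rho_cont continuous_on_rabs[OF continuous_on_id]]) auto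
  then have "(\<lambda>s. \<rho> \<bar>s\<bar>) \<in> borel_measurable borel"
    by (rule borel_measurable_continuous_onI)
  then have f: "f \<in> borel_measurable borel"
    unfolding f_def by measurable
  have mu_f: "\<mu> = density lborel (\<lambda>x. f (norm x))"
    by (simp add: mu_def f_def)
  have events: "sets \<mu> = sets borel" by (simp add: mu_def)
  have C: "?C \<in> sets borel" "cone ?C"
    using A_closed A_0 by (simp_all add: radial_cone_borel radial_cone_cone)
  have star: "\<theta> *\<^sub>R x \<in> A" if "x \<in> A" "0 \<le> \<theta>" "\<theta> \<le> 1" for x \<theta>
    using convex_star_origin[OF A_convex A_0] that .
  show ?thesis
  proof (rule correlation_from_independent_sandwich)
    show "A \<in> events" "cball 0 r \<in> events" "?C \<in> events"
      using A_closed C by (simp_all add: events)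
    show "?C \<inter> cball 0 r \<subseteq> A" by (rule radial_cone_inside_ball[OF star A_0 r_pos])
    show "A - cball 0 r \<subseteq> ?C" by (rule radial_cone_outside_ball[OF star r_pos])
    show "prob (?C \<inter> cball 0 r) = prob ?C * prob (cball 0 r)"
      by (rule radial_prob_cone_cball_indep[OF f mu_f prob C])
  qed
qed

end
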